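(* Let $\theta>1$, $t>0$, let $G:\mathbb R\to\mathbb R$ be bounded, and let $\{\mu_N\}$ be any sequence of probability measures on $\Omega_N$. Then $$\limsup_{N\to\infty}\mathbb E_{\mu_N}\Big[\Big|\int_0^tN^{1-\theta}\sum_{x\in\Lambda_N}G(\tfrac xN)r_N^-(\tfrac xN)(\eta_x(sN^2)-\alpha)\,ds\Big|\Big]=0,$$ $$\limsup_{N\to\infty}\mathbb E_{\mu_N}\Big[\Big|\int_0^tN^{1-\theta}\sum_{x\in\Lambda_N}G(\tfrac xN)r_N^+(\tfrac xN)(\eta_x(sN^2)-\beta)\,ds\Big|\Big]=0.$$
   Context: Fix $\gamma>2$, $p(0)=0$, $p(z)=c_\gamma|z|^{-\gamma-1}$ ($z\ne0$) with $c_\gamma$ normalizing; $\alpha,\beta\in(0,1)$, $\kappa>0$. $\Lambda_N=\{1,\dots,N-1\}$, $\Omega_N=\{0,1\}^{\Lambda_N}$; $\sigma^{x,y}\eta$ exchanges $\eta_x,\eta_y$; $\sigma^x\eta$ flips $\eta_x$; $c_x(\eta;a)=\eta_x(1-a)+(1-\eta_x)a$. $L_N=L_N^0+L_N^\ell+L_N^r$, $(L_N^0f)(\eta)=\frac12\sum_{x,y\in\Lambda_N}p(x-y)[f(\sigma^{x,y}\eta)-f(\eta)]$, $(L_N^\ell f)(\eta)=\frac{\kappa}{N^\theta}\sum_{x\in\Lambda_N,y\le0}p(x-y)c_x(\eta;\alpha)[f(\sigma^x\eta)-f(\eta)]$, $(L_N^rf)(\eta)=\frac{\kappa}{N^\theta}\sum_{x\in\Lambda_N,y\ge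 N}p(x-y)c_x(\eta;\beta)[f(\sigma^x\eta)-f(\eta)]$. $(\eta(t))_{t\ge0}$ is the Markov process on $\Omega_N$ with generator $L_N$ and initial law $\mu_N$; $\mathbb E_{\mu_N}$ is the corresponding expectation. $r_N^-(\frac xN)=\sum_{y\ge x}p(y)$, $r_N^+(\frac xN)=\sum_{y\le x-N}p(y)$. *)

theory Defs
  imports "HOL-Probability.Probability"
begin

text \<open>Configurations: eta :: int => bool, with eta x = True meaning a particle at x.
  Omega_N is the set of configurations vanishing outside Lambda_N = {1..N-1}.\<close>

definition Lam :: "nat \<Rightarrow> int set" where
  "Lam N = {1 .. int N - 1}"

definition Conf :: "nat \<Rightarrow> (int \<Rightarrow> bool) set" where
  "Conf N = {\<eta>. \<forall>x. \<eta> x \<longrightarrow> x \<in> Lam N}"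

definition cgam :: "real \<Rightarrow> real" where
  "cgam \<gamma> = 1 / (\<Sum>\<^sub>\<infinity>z\<in>(UNIV - {0::int}). \<bar>real_of_int z\<bar> powr (-\<gamma>-1))"

definition pker :: "real \<Rightarrow> int \<Rightarrow> real" where
  "pker \<gamma> z = (if z = 0 then 0 else cgam \<gamma> * \<bar>real_of_int z\<bar> powr (-\<gamma>-1))"

definition swap :: "(int \<Rightarrow> bool) \<Rightarrow> int \<Rightarrow> int \<Rightarrow> (int \<Rightarrow> bool)" where
  "swap \<eta> x y = \<eta>(x := \<eta> y, y := \<eta> x)"

definition flip :: "(int \<Rightarrow> bool) \<Rightarrow> int \<Rightarrow> (int \<Rightarrow> bool)" where
  "flip \<eta> x = \<eta>(x := \<not> \<eta> x)"

definition crate :: "int \<Rightarrow> (int \<Rightarrow> bool) \<Rightarrow> real \<Rightarrow> real" where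
  "crate x \<eta> a = (if \<eta> x then 1 - a else a)"

definition gen :: "real \<Rightarrow> real \<Rightarrow> real \<Rightarrow> real \<Rightarrow> real \<Rightarrow> nat
    \<Rightarrow> ((int \<Rightarrow> bool) \<Rightarrow> real) \<Rightarrow> (int \<Rightarrow> bool) \<Rightarrow> real" where
  "gen \<gamma> \<kappa> \<theta> \<alpha> \<beta> N f \<eta> =
     (1/2) * (\<Sum>x\<in>Lam N. \<Sum>y\<in>Lam N. pker \<gamma> (x - y) * (f (swap \<eta> x y) - f \<eta>))
   + \<kappa> / real N powr \<theta> * (\<Sum>x\<in>Lam N. \<Sum>\<^sub>\<infinity>y\<in>{..0}. pker \<gamma> (x - y) * crate x \<eta> \<alpha> * (f (flip \<eta> x) - f \<eta>))
   + \<kappa> / real N powr \<theta> * (\<Sum>x\<in>Lam N. \<Sum>\<^sub>\<infinity>y\<in>{int N..}. pker \<gamma> (x - y) * crate x \<eta> \<beta> * (f (flip \<eta> x) - f \<eta>))"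

definition trans :: "real \<Rightarrow> real \<Rightarrow> real \<Rightarrow> real \<Rightarrow> real \<Rightarrow> nat \<Rightarrow> real
    \<Rightarrow> (int \<Rightarrow> bool) \<Rightarrow> (int \<Rightarrow> bool) \<Rightarrow> real" where
  "trans \<gamma> \<kappa> \<theta> \<alpha> \<beta> N t \<xi> \<zeta> =
     (\<Sum>k. t ^ k / fact k * ((gen \<gamma> \<kappa> \<theta> \<alpha> \<beta> N ^^ k) (\<lambda>\<eta>. of_bool (\<eta> = \<zeta>)) \<xi>))"

text \<open>X is (a cadlag version of) the Markov process with generator L_N and initial law mu,
  realized on the probability space M: cadlag paths in the discrete space Omega_N, measurable
  coordinates, and the finite-dimensional distributions of the Markov chain.\<close>
definition markov_proc :: "real \<Rightarrow> real \<Rightarrow> real \<Rightarrow> real \<Rightarrow> real \<Rightarrow> nat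
    \<Rightarrow> (int \<Rightarrow> bool) pmf \<Rightarrow> 'w measure \<Rightarrow> (real \<Rightarrow> 'w \<Rightarrow> (int \<Rightarrow> bool)) \<Rightarrow> bool" where
  "markov_proc \<gamma> \<kappa> \<theta> \<alpha> \<beta> N \<mu> M X \<longleftrightarrow>
     prob_space M \<and>
     (\<forall>t\<ge>0. X t \<in> M \<rightarrow>\<^sub>M count_space UNIV) \<and>
     (\<forall>\<omega>\<in>space M. \<forall>t\<ge>0. X t \<omega> \<in> Conf N) \<and>
     (\<forall>\<omega>\<in>space M. \<forall>t\<ge>0. \<exists>\<delta>>0. \<forall>s. t \<le> s \<and> s < t + \<delta> \<longrightarrow> X s \<omega> = X t \<omega>) \<and>
     (\<forall>\<omega>\<in>space M. \<forall>t>0. \<exists>\<delta>>0. \<exists>\<xi>. \<forall>s. t - \<delta> < s \<and> s < t \<longrightarrow> X s \<omega> = \<xi>) \<and>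
     (\<forall>ts \<xi>s. sorted_wrt (<) ts \<and> (\<forall>s\<in>set ts. 0 \<le> s) \<and> length \<xi>s = length ts \<longrightarrow>
        measure M {\<omega>\<in>space M. \<forall>i<length ts. X (ts ! i) \<omega> = \<xi>s ! i} =
        (\<Sum>\<xi>0\<in>Conf N. pmf \<mu> \<xi>0 *
           (\<Prod>i<length ts. trans \<gamma> \<kappa> \<theta> \<alpha> \<beta> N
               (ts ! i - (if i = 0 then 0 else ts ! (i - 1)))
               (if i = 0 then \<xi>0 else \<xi>s ! (i - 1)) (\<xi>s ! i))))"

definition rminus :: "real \<Rightarrow> int \<Rightarrow> real" where
  "rminus \<gamma> x = (\<Sum>\<^sub>\<infinity>y\<in>{x..}. pker \<gamma> y)"

definition rplus :: "real \<Rightarrow> nat \<Rightarrow> int \<Rightarrow> real" where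
  "rplus \<gamma> N x = (\<Sum>\<^sub>\<infinity>y\<in>{..x - int N}. pker \<gamma> y)"

end

theory Submission
  imports Defs
begin

text \<open>The estimate is deterministic. Since \<open>G\<close> is bounded
  and \<open>|\<eta>\<^sub>x - \<alpha>| \<le> 1\<close>, the integrand is at most \<open>sup |G| N^(1-\<theta>) \<Sum>\<^sub>x r\<^sub>N\<^sup>-(x/N)\<close>.
  A site \<open>y \<ge> 1\<close> contributes \<open>p(y)\<close> to \<open>r\<^sub>N\<^sup>-(x/N)\<close> only for the at most \<open>y\<close> sites
  \<open>1 \<le> x \<le> y\<close>, so \<open>\<Sum>\<^sub>x r\<^sub>N\<^sup>-(x/N) \<le> \<Sum>\<^sub>y\<^sub>\<ge>\<^sub>1 y p(y)\<close>, which is finite because \<open>\<gamma> > 1\<close>; the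
  reflection \<open>x \<mapsto> N - x\<close> gives the same bound for \<open>r\<^sub>N\<^sup>+\<close>. Both expectations are therefore
  \<open>O(t N^(1-\<theta>))\<close>, which vanishes as \<open>\<theta> > 1\<close>.\<close>

lemma pker_nonneg: "0 \<le> pker \<gamma> z"
  unfolding pker_def cgam_def by (auto intro!: divide_nonneg_nonneg infsum_nonneg)

lemma pker_uminus: "pker \<gamma> (- z) = pker \<gamma> z"
  unfolding pker_def by auto

lemma pker_first_moment_summable:
  assumes "\<gamma> > 1"
  shows "(\<lambda>y. real_of_int y * pker \<gamma> y) summable_on {1::int..}"
proof -
  have "summable (\<lambda>n. real n powr (-\<gamma>))"
    using assms by (subst summable_real_powr_iff) auto
  then have "(\<lambda>n. real n powr (-\<gamma>)) summable_on UNIV"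
    by (subst summable_on_UNIV_nonneg_real_iff) auto
  then have "(\<lambda>n. real n powr (-\<gamma>)) summable_on {1::nat..}"
    by (rule summable_on_subset_banach) auto
  then have "(\<lambda>n. cgam \<gamma> * real n powr (-\<gamma>)) summable_on {1::nat..}"
    by (rule summable_on_cmult_right)
  then have "((\<lambda>y. real_of_int y * pker \<gamma> y) \<circ> int) summable_on {1::nat..}"
  proof (rule summable_on_cong[THEN iffD1, rotated])
    fix n :: nat assume "n \<in> {1..}"
    then have "real n * real n powr (-\<gamma>-1) = real n powr (-\<gamma>)"
      by (simp add: powr_diff powr_minus field_simps)
    then show "cgam \<gamma> * real n powr (-\<gamma>) = ((\<lambda>y. real_of_int y * pker \<gamma> y) \<circ> int) n"
      using \<open>n \<in> {1..}\<close> by (simp add: pker_def)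
  qed
  moreover have "int ` {1::nat..} = {1::int..}"
  proof (intro equalityI subsetI)
    fix x :: int assume "x \<in> {1..}"
    then show "x \<in> int ` {1..}" by (intro image_eqI[of _ _ "nat x"]) auto
  qed auto
  ultimately show ?thesis
    by (metis inj_on_of_nat summable_on_reindex)
qed

definition pker_first_moment :: "real \<Rightarrow> real" where
  "pker_first_moment \<gamma> = (\<Sum>\<^sub>\<infinity>y\<in>{1::int..}. real_of_int y * pker \<gamma> y)"

lemma has_sum_sum:
  fixes f :: "'i \<Rightarrow> 'a \<Rightarrow> 'b::topological_comm_monoid_add"
  assumes "finite I" "\<And>i. i \<in> I \<Longrightarrow> (f i has_sum s i) A"
  shows "((\<lambda>y. \<Sum>i\<in>I. f i y) has_sum (\<Sum>i\<in>I. s i)) A"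
  using assms by (induction I rule: finite_induct) (auto intro: has_sum_add)

lemma has_sum_rminus:
  assumes "\<gamma> > 1" "x \<ge> 1"
  shows "((\<lambda>y. if x \<le> y then pker \<gamma> y else 0) has_sum rminus \<gamma> x) {1..}"
proof -
  have "pker \<gamma> summable_on {x..}"
  proof (rule summable_on_comparison_test)
    show "(\<lambda>y. real_of_int y * pker \<gamma> y) summable_on {x..}"
      using pker_first_moment_summable[OF assms(1)] by (rule summable_on_subset_banach) (use assms(2) in auto)
    show "pker \<gamma> y \<le> real_of_int y * pker \<gamma> y" if "y \<in> {x..}" for y
      using that assms(2) pker_nonneg[of \<gamma> y] by (simp add: mult_le_cancel_right1)
  qed (simp add: pker_nonneg)
  then have "(pker \<gamma> has_sum rminus \<gamma> x) {x..}"
    unfolding rminus_def by (rule has_sum_infsum)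
  then show ?thesis
    by (rule has_sum_cong_neutral[THEN iffD1, rotated -1]) (use assms(2) in auto)
qed

lemma sum_rminus_le_first_moment:
  assumes "\<gamma> > 1"
  shows "(\<Sum>x\<in>Lam N. rminus \<gamma> x) \<le> pker_first_moment \<gamma>"
proof (rule has_sum_mono)
  show "((\<lambda>y. \<Sum>x\<in>Lam N. if x \<le> y then pker \<gamma> y else 0) has_sum (\<Sum>x\<in>Lam N. rminus \<gamma> x)) {1..}"
    using assms by (intro has_sum_sum has_sum_rminus) (auto simp: Lam_def)
  show "((\<lambda>y. real_of_int y * pker \<gamma> y) has_sum pker_first_moment \<gamma>) {1..}"
    unfolding pker_first_moment_def using pker_first_moment_summable[OF assms] by simp
  fix y :: int assume "y \<in> {1..}"
  have "(\<Sum>x\<in>Lam N. if x \<le> y then pker \<gamma> y else 0) = (\<Sum>x\<in>Lam N \<inter> {..y}. pker \<gamma> y)"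
    by (simp add: sum.If_cases Lam_def Int_def)
  also have "\<dots> \<le> (\<Sum>x\<in>{1..y}. pker \<gamma> y)"
    by (rule sum_mono2) (auto simp: Lam_def pker_nonneg)
  finally show "(\<Sum>x\<in>Lam N. if x \<le> y then pker \<gamma> y else 0) \<le> real_of_int y * pker \<gamma> y"
    using \<open>y \<in> {1..}\<close> by simp
qed

lemma rplus_eq_rminus: "rplus \<gamma> N x = rminus \<gamma> (int N - x)"
proof -
  have "{..x - int N} = uminus ` {int N - x..}"
    by (auto simp: image_iff intro!: bexI[of _ "- _"])
  then have "rplus \<gamma> N x = infsum (pker \<gamma> \<circ> uminus) {int N - x..}"
    unfolding rplus_def by (simp only:) (rule infsum_reindex, simp)
  then show ?thesis
    unfolding rminus_def by (simp add: o_def pker_uminus)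
qed

lemma sum_rplus_eq_sum_rminus: "(\<Sum>x\<in>Lam N. rplus \<gamma> N x) = (\<Sum>x\<in>Lam N. rminus \<gamma> x)"
  unfolding rplus_eq_rminus
  by (rule sum.reindex_bij_witness[of _ "\<lambda>x. int N - x" "\<lambda>x. int N - x"]) (auto simp: Lam_def)

lemma rminus_nonneg: "0 \<le> rminus \<gamma> x"
  unfolding rminus_def by (simp add: infsum_nonneg pker_nonneg)

lemma rplus_nonneg: "0 \<le> rplus \<gamma> N x"
  unfolding rplus_def by (simp add: infsum_nonneg pker_nonneg)

text \<open>No measurability or integrability is required here or in \<open>expectation_abs_le\<close>: the Bochner
  integral of a non-integrable function is \<open>0\<close>, so the bounds hold trivially in that case.\<close>

lemma abs_set_integral_Icc_le:
  fixes f :: "real \<Rightarrow> real"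
  assumes "t \<ge> 0" "\<And>s. \<bar>f s\<bar> \<le> C"
  shows "\<bar>LBINT s:{0..t}. f s\<bar> \<le> t * C"
proof -
  have C: "0 \<le> C" using assms(2)[of 0] by linarith
  have int: "integrable lborel (\<lambda>s. C * indicator {0..t} s :: real)"
    by (auto simp: emeasure_lborel_Icc_eq)
  have "(LBINT s:{0..t}. f s) \<le> (\<integral>s. C * indicator {0..t} s \<partial>lborel)"
    unfolding set_lebesgue_integral_def
    by (rule integral_mono'[OF int]) (use assms C in \<open>auto simp: indicator_def abs_le_iff\<close>)
  moreover have "- (LBINT s:{0..t}. f s) \<le> (\<integral>s. C * indicator {0..t} s \<partial>lborel)"
    unfolding set_lebesgue_integral_def integral_minus[symmetric]
    by (rule integral_mono'[OF int]) (use assms C in \<open>auto simp: indicator_def abs_le_iff\<close>)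
  ultimately show ?thesis
    using assms(1) by (simp add: abs_le_iff mult.commute)
qed

lemma (in prob_space) expectation_abs_le:
  fixes Y :: "'a \<Rightarrow> real"
  assumes "\<And>\<omega>. \<bar>Y \<omega>\<bar> \<le> C"
  shows "(\<integral>\<omega>. \<bar>Y \<omega>\<bar> \<partial>M) \<le> C"
proof -
  have "(\<integral>\<omega>. \<bar>Y \<omega>\<bar> \<partial>M) \<le> (\<integral>\<omega>. C \<partial>M)"
    by (rule integral_mono') (use assms order_trans[OF abs_ge_zero] in auto)
  then show ?thesis by (simp add: prob_space)
qed

lemma abs_weighted_sum_le:
  fixes g w h :: "'i \<Rightarrow> real"
  assumes "\<And>i. \<bar>g i\<bar> \<le> B" "\<And>i. 0 \<le> w i" "\<And>i. \<bar>h i\<bar> \<le> 1" "(\<Sum>i\<in>I. w i) \<le> S"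
  shows "\<bar>\<Sum>i\<in>I. g i * w i * h i\<bar> \<le> B * S"
proof -
  have B: "0 \<le> B" using assms(1) order_trans[OF abs_ge_zero] by blast
  have "\<bar>\<Sum>i\<in>I. g i * w i * h i\<bar> \<le> (\<Sum>i\<in>I. \<bar>g i\<bar> * w i * \<bar>h i\<bar>)"
    using sum_abs[of "\<lambda>i. g i * w i * h i" I] assms(2) by (simp add: abs_mult)
  also have "\<dots> \<le> (\<Sum>i\<in>I. B * w i)"
  proof (rule sum_mono)
    fix i
    have "\<bar>g i\<bar> * w i * \<bar>h i\<bar> \<le> B * w i * 1"
      using assms(1-3) B by (intro mult_mono mult_right_mono) auto
    then show "\<bar>g i\<bar> * w i * \<bar>h i\<bar> \<le> B * w i" by simp
  qed
  also have "\<dots> \<le> B * S"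
    using assms(4) B by (simp add: sum_distrib_left[symmetric] mult_left_mono)
  finally show ?thesis .
qed

lemma limsup_eq_0_if_powr_bound:
  fixes E :: "nat \<Rightarrow> real"
  assumes "\<theta> > 1" "\<And>N. 0 \<le> E N" "\<And>N. E N \<le> C * real N powr (1 - \<theta>)"
  shows "limsup (\<lambda>N. ereal (E N)) = 0"
proof -
  have "(\<lambda>N. real N powr (1 - \<theta>)) \<longlonglongrightarrow> 0"
    by (rule tendsto_neg_powr) (use assms(1) filterlim_real_sequentially in auto)
  then have "(\<lambda>N. C * real N powr (1 - \<theta>)) \<longlonglongrightarrow> 0"
    by (rule tendsto_mult_right_zero)
  then have "E \<longlonglongrightarrow> 0"
    by (intro tendsto_sandwich[of "\<lambda>_. 0" E sequentially "\<lambda>N. C * real N powr (1 - \<theta>)"])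
      (simp_all add: assms(2,3))
  then have "(\<lambda>N. ereal (E N)) \<longlonglongrightarrow> 0"
    by (simp add: zero_ereal_def tendsto_ereal)
  then show ?thesis
    by (simp add: lim_imp_Limsup)
qed

lemma boundary_integral_limsup_eq_0:
  fixes G :: "real \<Rightarrow> real" and r :: "nat \<Rightarrow> int \<Rightarrow> real"
    and M :: "nat \<Rightarrow> 'w measure" and X :: "nat \<Rightarrow> real \<Rightarrow> 'w \<Rightarrow> (int \<Rightarrow> bool)"
  assumes "\<theta> > 1" "t > 0" "0 < a" "a < 1" "\<And>u. \<bar>G u\<bar> \<le> B"
    and "\<And>N x. 0 \<le> r N x" "\<And>N. (\<Sum>x\<in>Lam N. r N x) \<le> S" "\<And>N. prob_space (M N)"
  shows "limsup (\<lambda>N. ereal (\<integral>\<omega>. \<bar>LBINT s:{0..t}. real N powr (1 - \<theta>) *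
            (\<Sum>x\<in>Lam N. G (real_of_int x / real N) * r N x *
               (of_bool (X N (s * real N ^ 2) \<omega> x) - a))\<bar> \<partial>M N)) = 0"
proof (rule limsup_eq_0_if_powr_bound[OF assms(1)])
  fix N :: nat
  have "\<bar>\<Sum>x\<in>Lam N. G (real_of_int x / real N) * r N x * (of_bool (X N (s * real N ^ 2) \<omega> x) - a)\<bar>
      \<le> B * S" for s \<omega>
    using assms(3-7) by (intro abs_weighted_sum_le) auto
  then have "\<bar>real N powr (1 - \<theta>) * (\<Sum>x\<in>Lam N. G (real_of_int x / real N) * r N x *
      (of_bool (X N (s * real N ^ 2) \<omega> x) - a))\<bar> \<le> real N powr (1 - \<theta>) * (B * S)" for s \<omega>
    by (simp add: abs_mult mult_left_mono)
  then show "(\<integral>\<omega>. \<bar>LBINT s:{0..t}. real N powr (1 - \<theta>) *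
      (\<Sum>x\<in>Lam N. G (real_of_int x / real N) * r N x *
         (of_bool (X N (s * real N ^ 2) \<omega> x) - a))\<bar> \<partial>M N)
      \<le> t * B * S * real N powr (1 - \<theta>)"
    using assms(2) by (intro prob_space.expectation_abs_le[OF assms(8)] order_trans[OF abs_set_integral_Icc_le])
      (auto simp: mult_ac)
qed simp

theorem lemma5p6:
  fixes \<gamma> \<alpha> \<beta> \<kappa> \<theta> t :: real
    and G :: "real \<Rightarrow> real"
    and \<mu> :: "nat \<Rightarrow> (int \<Rightarrow> bool) pmf"
    and M :: "nat \<Rightarrow> 'w measure"
    and X :: "nat \<Rightarrow> real \<Rightarrow> 'w \<Rightarrow> (int \<Rightarrow> bool)"
  assumes "\<gamma> > 2" and "0 < \<alpha>" "\<alpha> < 1" and "0 < \<beta>" "\<beta> < 1" and "\<kappa> > 0"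
    and "\<theta> > 1" and "t > 0"
    and "bounded (range G)"
    and "\<And>N. set_pmf (\<mu> N) \<subseteq> Conf N"
    and "\<And>N. markov_proc \<gamma> \<kappa> \<theta> \<alpha> \<beta> N (\<mu> N) (M N) (X N)"
  shows "limsup (\<lambda>N. ereal (\<integral>\<omega>. \<bar>LBINT s:{0..t}. real N powr (1 - \<theta>) *
            (\<Sum>x\<in>Lam N. G (real_of_int x / real N) * rminus \<gamma> x *
               (of_bool (X N (s * real N ^ 2) \<omega> x) - \<alpha>))\<bar> \<partial>M N)) = 0
    \<and> limsup (\<lambda>N. ereal (\<integral>\<omega>. \<bar>LBINT s:{0..t}. real N powr (1 - \<theta>) *
            (\<Sum>x\<in>Lam N. G (real_of_int x / real N) * rplus \<gamma> N x *
               (of_bool (X N (s * real N ^ 2) \<omega> x) - \<beta>))\<bar> \<partial>M N)) = 0"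
proof -
  obtain B where "\<And>u. \<bar>G u\<bar> \<le> B"
    using assms(9) unfolding bounded_iff by auto
  moreover have "prob_space (M N)" for N
    using assms(11)[of N] unfolding markov_proc_def by blast
  moreover have "\<gamma> > 1" using assms(1) by simp
  then have "(\<Sum>x\<in>Lam N. rminus \<gamma> x) \<le> pker_first_moment \<gamma>"
    and "(\<Sum>x\<in>Lam N. rplus \<gamma> N x) \<le> pker_first_moment \<gamma>" for N
    using sum_rminus_le_first_moment sum_rplus_eq_sum_rminus by metis+
  ultimately show ?thesis
    using assms(2-5,7,8) rminus_nonneg rplus_nonneg
    by (intro conjI boundary_integral_limsup_eq_0[where S = "pker_first_moment \<gamma>"]) auto
qed

end
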